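(* Let $\mathcal{S}$ be a nonempty semigroup with set of idempotents $E(\mathcal{S})$. Let $T$ be a finite $\mathcal{S}$-valued sequence with $\prod(T)\cap E(\mathcal{S})=\emptyset$, let $x$ be a term of $T$, and let $T'$ denote the sequence obtained from $T$ by deleting one occurrence of the term $x$. Then $|\prod(T)\setminus \prod(T')|\ge 1$ (equivalently, $\lambda_{T'}(x)=|\prod(T'\cdot x)\setminus\prod(T')|\ge 1$, where $T'\cdot x$ is $T'$ with $x$ appended).
   Context: For a finite sequence $T=x_1x_2\cdots x_\ell$ of elements of a semigroup $(\mathcal{S},* )$, $\prod(T)$ denotes the set of all products $x_{i_{\sigma(1)}}*x_{i_{\sigma(2)}}*\cdots*x_{i_{\sigma(k)}}$, where $x_{i_1}\cdots x_{i_k}$ ranges over all nonempty subsequences of $T$ and $\sigma$ over all permutations of $\{1,\dots,k\}$ (so $\prod$ of the empty sequence is $\emptyset$). $E(\mathcal{S})$ is the set of $e\in\mathcal{S}$ with $e*e=e$. *)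

theory Defs
  imports Main "HOL-Library.Multiset"
begin

fun sprod :: "'a::semigroup_mult list \<Rightarrow> 'a" where
  "sprod [] = undefined"
| "sprod (x # xs) = foldl (*) x xs"

text \<open>A nonempty subsequence followed by a permutation is exactly a nonempty list ys
  whose multiset of terms is a sub-multiset of that of T.\<close>
definition Prods :: "'a::semigroup_mult list \<Rightarrow> 'a set" where
  "Prods T = {sprod ys | ys. ys \<noteq> [] \<and> mset ys \<subseteq># mset T}"

definition idempotents :: "'a::semigroup_mult set" where
  "idempotents = {e. e * e = e}"

end

theory Submission
  imports Defs
begin

text \<open>If all products of the terms of \<open>T\<close> were already products of the terms of
  \<open>T' = remove1 x T\<close>, then \<open>\<Prod>(T')\<close> would contain \<open>x\<close> and be closed under right
  multiplication by \<open>x\<close>; so it would contain every power of \<open>x\<close>. Being finite, it would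
  then contain an idempotent power of \<open>x\<close>, contradicting \<open>\<Prod>(T) \<inter> E(S) = {}\<close>.\<close>

text \<open>Powers in a semigroup without unit; \<open>spow x n\<close> stands for \<open>x\<^sup>n\<^sup>+\<^sup>1\<close>.\<close>
fun spow :: "'a::semigroup_mult \<Rightarrow> nat \<Rightarrow> 'a" where
  "spow x 0 = x"
| "spow x (Suc n) = spow x n * x"

lemma spow_add: "spow x (Suc (m + n)) = spow x m * spow x n"
  by (induction n) (simp_all add: mult.assoc)

lemma spow_eq_shift: "spow x i = spow x j \<Longrightarrow> spow x (i + m) = spow x (j + m)"
  by (induction m) simp_all

lemma spow_periodic:
  assumes "spow x i = spow x (i + p)" "i \<le> m"
  shows "spow x (m + p * t) = spow x m"
proof (induction t)
  case 0
  then show ?case by simp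
next
  case (Suc t)
  have "spow x (m + p * Suc t) = spow x (i + p + (m - i + p * t))"
    using assms(2) by (simp add: algebra_simps)
  also have "\<dots> = spow x (i + (m - i + p * t))"
    using spow_eq_shift[OF assms(1)[symmetric]] by (simp add: add.assoc)
  also have "\<dots> = spow x (m + p * t)"
    using assms(2) by simp
  finally show ?case
    using Suc by simp
qed

lemma spow_idempotent_if_finite:
  assumes "finite (range (spow x))"
  shows "\<exists>n. spow x n * spow x n = spow x n"
proof -
  have "\<not> inj (spow x)"
    using assms finite_imageD infinite_UNIV_nat by blast
  then obtain i j where "i < j" "spow x i = spow x j"
    unfolding inj_def by (metis linorder_neqE_nat)
  then obtain p where period: "spow x i = spow x (i + p)" and "p > 0"
    using less_imp_add_positive by blast
  \<comment> \<open>\<open>n + 1\<close> is a multiple of the period \<open>p\<close> beyond the preperiod \<open>i\<close>\<close>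
  define n where "n = p * (i + 1) - 1"
  have n: "Suc n = p * (i + 1)"
    using \<open>p > 0\<close> unfolding n_def by simp
  have "i \<le> n"
  proof -
    have "1 * (i + 1) \<le> p * (i + 1)"
      using \<open>p > 0\<close> by (intro mult_right_mono) auto
    then show ?thesis
      using n by simp
  qed
  have "spow x n * spow x n = spow x (Suc (n + n))"
    by (rule spow_add[symmetric])
  also have "Suc (n + n) = n + p * (i + 1)"
    using n by simp
  also have "spow x (n + p * (i + 1)) = spow x n"
    using spow_periodic[OF period \<open>i \<le> n\<close>] .
  finally show ?thesis ..
qed

lemma idempotent_in_right_closed_finite:
  fixes x :: "'a::semigroup_mult"
  assumes "finite A" "x \<in> A" "\<And>a. a \<in> A \<Longrightarrow> a * x \<in> A"
  shows "\<exists>e\<in>A. e * e = e"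
proof -
  have powers: "spow x n \<in> A" for n
    by (induction n) (simp_all add: assms(2,3))
  then have "range (spow x) \<subseteq> A"
    by blast
  then obtain n where "spow x n * spow x n = spow x n"
    using spow_idempotent_if_finite assms(1) finite_subset by blast
  then show ?thesis
    using powers by blast
qed

lemma finite_Prods: "finite (Prods T)"
proof -
  have "Prods T \<subseteq> sprod ` {ys. set ys \<subseteq> set T \<and> length ys \<le> length T}"
  proof
    fix a
    assume "a \<in> Prods T"
    then obtain ys where "a = sprod ys" "mset ys \<subseteq># mset T"
      unfolding Prods_def by blast
    then show "a \<in> sprod ` {ys. set ys \<subseteq> set T \<and> length ys \<le> length T}"
      using set_mset_mono size_mset_mono by fastforce
  qed
  then show ?thesis
    by (rule finite_subset) (simp add: finite_lists_length_le)
qed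

lemma Prods_mono: "mset T \<subseteq># mset U \<Longrightarrow> Prods T \<subseteq> Prods U"
  unfolding Prods_def by (auto intro: subset_mset.order_trans)

lemma term_in_Prods: "x \<in> set T \<Longrightarrow> x \<in> Prods T"
  unfolding Prods_def by (rule CollectI, rule exI[of _ "[x]"]) simp

lemma mult_right_in_Prods:
  assumes "a \<in> Prods T"
  shows "a * x \<in> Prods (x # T)"
proof -
  obtain ys where ys: "a = sprod ys" "ys \<noteq> []" "mset ys \<subseteq># mset T"
    using assms unfolding Prods_def by blast
  have "sprod (ys @ [x]) = a * x"
    using ys(1,2) by (cases ys) auto
  moreover have "mset (ys @ [x]) \<subseteq># mset (x # T)"
    using ys(3) by simp
  ultimately show ?thesis
    unfolding Prods_def by (intro CollectI exI[of _ "ys @ [x]"]) simp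
qed

theorem lemma3p1:
  fixes T :: "'a::semigroup_mult list" and x :: 'a
  assumes "Prods T \<inter> idempotents = {}"
    and "x \<in> set T"
  shows "card (Prods T - Prods (remove1 x T)) \<ge> 1"
proof -
  let ?T' = "remove1 x T"
  have sub: "Prods ?T' \<subseteq> Prods T"
    by (simp add: Prods_mono)
  have "mset (x # ?T') = mset T"
    using assms(2) by simp
  then have Prods_T: "Prods (x # ?T') = Prods T"
    using Prods_mono[of "x # ?T'" T] Prods_mono[of T "x # ?T'"] by auto
  have "Prods T - Prods ?T' \<noteq> {}"
  proof
    assume "Prods T - Prods ?T' = {}"
    then have "Prods T \<subseteq> Prods ?T'"
      by blast
    then have "x \<in> Prods ?T'" and "\<And>a. a \<in> Prods ?T' \<Longrightarrow> a * x \<in> Prods ?T'"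
      using term_in_Prods[OF assms(2)] mult_right_in_Prods[of _ ?T' x] Prods_T by auto
    then obtain e where "e \<in> Prods ?T'" "e * e = e"
      using idempotent_in_right_closed_finite finite_Prods by blast
    then show False
      using assms(1) sub unfolding idempotents_def by blast
  qed
  then show ?thesis
    by (simp add: Suc_le_eq card_gt_0_iff finite_Prods)
qed

end
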